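(* Let $\Sigma=\{a_1,\dots,a_n\}$ be an alphabet, let $\varphi:\Sigma^+\to\Sigma^+$ be a Parikh-positive morphism, and let $W=\{\varphi(a_i)\mid 1\leq i\leq n\}$. If $|W|<n$, then $\varphi$ is reducible.
   Context: A morphism $\varphi:\Sigma^+\to\Sigma^+$ satisfies $\varphi(uv)=\varphi(u)\varphi(v)$ (non-empty images); it is Parikh-positive if every letter of $\Sigma$ occurs in $\varphi(a_1)\cdots\varphi(a_n)$. An automorphism is an injective morphism mapping each letter to a single letter. $\varphi$ is reducible if $\varphi=\psi_2\circ\psi_1$ for morphisms $\psi_1,\psi_2:\Sigma^+\to\Sigma^+$ neither of which is an automorphism. *)

theory Defs
  imports Main
begin

text \<open>Alphabet: a finite type 'a (Sigma = UNIV, n = CARD('a)).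
 Words of Sigma^+ are nonempty lists; a map Sigma^+ to Sigma^+ is modelled as a
 function on lists whose values on the empty list are irrelevant.\<close>

definition is_morphism :: "('a list \<Rightarrow> 'a list) \<Rightarrow> bool" where
  "is_morphism f \<longleftrightarrow>
     (\<forall>u v. u \<noteq> [] \<longrightarrow> v \<noteq> [] \<longrightarrow> f (u @ v) = f u @ f v) \<and>
     (\<forall>w. w \<noteq> [] \<longrightarrow> f w \<noteq> [])"

definition parikh_positive :: "('a::finite list \<Rightarrow> 'a list) \<Rightarrow> bool" where
  "parikh_positive f \<longleftrightarrow> (\<forall>b. \<exists>a. b \<in> set (f [a]))"

definition is_automorphism :: "('a list \<Rightarrow> 'a list) \<Rightarrow> bool" where
  "is_automorphism f \<longleftrightarrow> is_morphism f \<and> inj_on f {w. w \<noteq> []} \<and>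
     (\<forall>a. length (f [a]) = 1)"

definition reducible :: "('a list \<Rightarrow> 'a list) \<Rightarrow> bool" where
  "reducible f \<longleftrightarrow> (\<exists>g1 g2. is_morphism g1 \<and> is_morphism g2 \<and>
      \<not> is_automorphism g1 \<and> \<not> is_automorphism g2 \<and>
      (\<forall>w. w \<noteq> [] \<longrightarrow> f w = g2 (g1 w)))"

end

theory Submission
  imports Defs
begin

text \<open>If two distinct letters \<open>a\<close>, \<open>b\<close> have the same image, then \<open>\<phi>\<close> factors as \<open>\<phi>\<close>
  after the letter-to-letter morphism sending \<open>b\<close> to \<open>a\<close>; both factors identify the words
  \<open>a\<close> and \<open>b\<close>, so neither is an automorphism.\<close>

lemma morphism_eq_concat_map:
  assumes "is_morphism f" and "w \<noteq> []"
  shows "f w = concat (map (\<lambda>c. f [c]) w)"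
  using assms(2)
proof (induction w)
  case Nil
  then show ?case by simp
next
  case (Cons x w)
  show ?case
  proof (cases "w = []")
    case True
    then show ?thesis by simp
  next
    case False
    have "f ([x] @ w) = f [x] @ f w"
      using assms(1) False unfolding is_morphism_def by blast
    then show ?thesis using Cons.IH False by simp
  qed
qed

lemma is_morphism_map: "is_morphism (map s)"
  unfolding is_morphism_def by simp

lemma not_automorphism_if_letters_collide:
  assumes "a \<noteq> b" and "f [a] = f [b]"
  shows "\<not> is_automorphism f"
  using assms unfolding is_automorphism_def inj_on_def by blast

lemma morphism_map_invariant:
  assumes "is_morphism f" and "\<And>c. f [s c] = f [c]" and "w \<noteq> []"
  shows "f (map s w) = f w"
proof -
  have "f (map s w) = concat (map (\<lambda>c. f [s c]) w)"
    using morphism_eq_concat_map[OF assms(1), of "map s w"] assms(3) by (simp add: comp_def)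
  also have "\<dots> = f w"
    using morphism_eq_concat_map[OF assms(1) assms(3)] assms(2) by simp
  finally show ?thesis .
qed

lemma reducible_if_letter_images_not_inj:
  assumes "is_morphism f" and "\<not> inj (\<lambda>a. f [a])"
  shows "reducible f"
proof -
  obtain a b where ab: "a \<noteq> b" "f [a] = f [b]"
    using assms(2) unfolding inj_def by blast
  define s where "s = id(b := a)"
  have "f [s c] = f [c]" for c
    unfolding s_def using ab(2) by simp
  then have "\<forall>w. w \<noteq> [] \<longrightarrow> f w = f (map s w)"
    using morphism_map_invariant[OF assms(1)] by simp
  moreover have "\<not> is_automorphism (map s)"
    by (rule not_automorphism_if_letters_collide[OF ab(1)]) (simp add: s_def)
  moreover have "\<not> is_automorphism f"
    using not_automorphism_if_letters_collide[OF ab] .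
  ultimately show ?thesis
    unfolding reducible_def using assms(1) is_morphism_map by blast
qed

theorem proposition3:
  fixes phi :: "'a::finite list \<Rightarrow> 'a list"
  assumes "is_morphism phi"
    and "parikh_positive phi"
    and "card ((\<lambda>a. phi [a]) ` UNIV) < card (UNIV :: 'a set)"
  shows "reducible phi"
proof -
  have "\<not> inj (\<lambda>a. phi [a])"
    using assms(3) card_image by (metis less_irrefl)
  then show ?thesis
    using reducible_if_letter_images_not_inj[OF assms(1)] by blast
qed

end
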